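(* Let $b\ge 2$ be even and $n\ge 2$, and put $c_i=b^{n+i}+1$. Then $$\mathrm{Ap}(SC^{+}(b,n),c_0)=\Big\{\sum_{i=1}^{n} t_i c_i : (t_1,\dots,t_n)\in RC_b(n)\Big\}.$$
   Context: For an even integer $b\ge2$ and $n\ge0$, $SC^{+}(b,n)=\langle\{b^{n+i}+1: i\in\mathbb{N}\}\rangle$ (submonoid of $(\mathbb{N},+)$ generated by these numbers). $\mathrm{Ap}(S,x)=\{s\in S:s-x\notin S\}$. $RC_b(n)$ is the set of $(t_1,\dots,t_n)\in\{0,1,\dots,b\}^n$ such that: (i) if $t_i=b$ then $t_j=0$ for all $1\le j<i$; (ii) $t_n\le b-1$; (iii) if $t_n=b-1$ then $t_1\le 1$ and $t_i=0$ for all $i\notin\{1,n\}$. *)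

theory Defs
  imports Main
begin

inductive_set monoid_gen :: "nat set \<Rightarrow> nat set" for A :: "nat set" where
  zero: "0 \<in> monoid_gen A"
| add: "a \<in> A \<Longrightarrow> s \<in> monoid_gen A \<Longrightarrow> a + s \<in> monoid_gen A"

definition SCplus :: "nat \<Rightarrow> nat \<Rightarrow> nat set" where
  "SCplus b n = monoid_gen {b ^ (n + i) + 1 | i. True}"

text \<open>Apery set; since x is a natural number, s - x \<notin> S includes the case s < x
  (s - x is then negative, hence not in S).\<close>
definition Apery :: "nat set \<Rightarrow> nat \<Rightarrow> nat set" where
  "Apery S x = {s \<in> S. \<not> (x \<le> s \<and> s - x \<in> S)}"

text \<open>RC_b(n): tuples (t_1..t_n) represented as functions nat \<Rightarrow> nat that vanish
  outside {1..n}.\<close>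
definition RC :: "nat \<Rightarrow> nat \<Rightarrow> (nat \<Rightarrow> nat) set" where
  "RC b n = {t. (\<forall>i. i \<notin> {1..n} \<longrightarrow> t i = 0) \<and> (\<forall>i\<in>{1..n}. t i \<le> b)
     \<and> (\<forall>i\<in>{1..n}. t i = b \<longrightarrow> (\<forall>j. 1 \<le> j \<and> j < i \<longrightarrow> t j = 0))
     \<and> t n \<le> b - 1
     \<and> (t n = b - 1 \<longrightarrow> t 1 \<le> 1 \<and> (\<forall>i\<in>{1..n}. i \<noteq> 1 \<and> i \<noteq> n \<longrightarrow> t i = 0))}"

end

theory Submission
  imports Defs "HOL-Library.Multiset" "HOL-Number_Theory.Cong"
begin

text \<open>With the repunits \<open>R\<^sub>j = (b\<^sup>j - 1)/(b - 1)\<close> the generators are \<open>c\<^sub>j = b\<^sup>n(b - 1) R\<^sub>j + c\<^sub>0\<close>, so an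
  element of the semigroup written with a multiset \<open>J\<close> of generator indices equals
  \<open>b\<^sup>n(b - 1) \<Sum>\<^sub>J R\<^sub>j + c\<^sub>0 |J|\<close>. Reduce \<open>\<Sum>\<^sub>J R\<^sub>j\<close> modulo \<open>c\<^sub>0\<close> to some \<open>w \<le> b\<^sup>n\<close> and write \<open>w\<close> in the
  greedy mixed radix of repunits (repeatedly trading \<open>b R\<^sub>i + R\<^sub>j\<close> for \<open>R\<^sub>i\<^sub>+\<^sub>1 + b R\<^sub>j\<^sub>-\<^sub>1\<close>): the
  digit vectors of such \<open>w\<close> are exactly \<open>RC\<^sub>b(n)\<close>, and normal forms use the fewest summands.
  Hence every element is \<open>\<Sum> t\<^sub>i c\<^sub>i + D c\<^sub>0\<close> with \<open>t \<in> RC\<^sub>b(n)\<close>. Conversely, for even \<open>b\<close> the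
  factor \<open>b\<^sup>n(b - 1)\<close> is a unit modulo \<open>c\<^sub>0\<close>, so \<open>\<Sum> t\<^sub>i c\<^sub>i\<close> determines the digits of \<open>t\<close> and no
  such sum exceeds another by a positive multiple of \<open>c\<^sub>0\<close>; these sums form the Apery set.\<close>

primrec repunit :: "nat \<Rightarrow> nat \<Rightarrow> nat" where
  "repunit b 0 = 0"
| "repunit b (Suc j) = b * repunit b j + 1"

lemma repunit_eq:
  assumes "b \<ge> 1"
  shows "(b - 1) * repunit b j + 1 = b ^ j"
proof (induction j)
  case 0
  show ?case by simp
next
  case (Suc j)
  obtain c where "b = Suc c" using assms by (cases b) auto
  then have "(b - 1) * repunit b (Suc j) + 1 = b * ((b - 1) * repunit b j + 1)"
    by (simp add: algebra_simps)
  also have "\<dots> = b ^ Suc j" using Suc.IH by simp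
  finally show ?case .
qed

lemma repunit_pos: "j \<ge> 1 \<Longrightarrow> repunit b j \<ge> 1"
  by (cases j) auto

lemma repunit_strict_mono:
  assumes "b \<ge> 1" and "i < j"
  shows "repunit b i < repunit b j"
  using assms(2)
proof (induction j)
  case 0
  then show ?case by simp
next
  case (Suc j)
  have "repunit b j \<le> b * repunit b j" using assms(1) by simp
  then have "repunit b j < repunit b (Suc j)" by (simp add: le_imp_less_Suc)
  then show ?case using Suc by (cases "i = j") auto
qed

lemma repunit_less_iff: "b \<ge> 1 \<Longrightarrow> repunit b i < repunit b j \<longleftrightarrow> i < j"
  by (metis linorder_neqE_nat not_less_iff_gr_or_eq repunit_strict_mono)

lemma repunit_ge_Suc_base:
  assumes "b \<ge> 1" and "i \<ge> 2"
  shows "repunit b i \<ge> b + 1"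
proof -
  have "repunit b 2 = b + 1" by (simp add: numeral_2_eq_2)
  then show ?thesis
    using repunit_strict_mono[OF assms(1), of 2 i] assms(2) by (cases "i = 2") auto
qed

lemma power_less_repunit_Suc:
  assumes "b \<ge> 2" and "n \<ge> 1"
  shows "b ^ n < repunit b (Suc n)"
  using repunit_eq[of b n] repunit_pos[OF assms(2), of b] assms(1)
  by (cases b) (auto simp: algebra_simps)

definition repunit_val :: "nat \<Rightarrow> nat \<Rightarrow> (nat \<Rightarrow> nat) \<Rightarrow> nat" where
  "repunit_val b K t = (\<Sum>i=1..K. t i * repunit b i)"

definition digit_sum :: "nat \<Rightarrow> (nat \<Rightarrow> nat) \<Rightarrow> nat" where
  "digit_sum K t = (\<Sum>i=1..K. t i)"

definition repunit_normal :: "nat \<Rightarrow> nat \<Rightarrow> (nat \<Rightarrow> nat) \<Rightarrow> bool" where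
  "repunit_normal b K t \<longleftrightarrow>
     (\<forall>i\<in>{1..K}. t i \<le> b \<and> (t i = b \<longrightarrow> (\<forall>j. 1 \<le> j \<and> j < i \<longrightarrow> t j = 0)))"

lemma repunit_val_Suc: "repunit_val b (Suc K) t = repunit_val b K t + t (Suc K) * repunit b (Suc K)"
  unfolding repunit_val_def by (simp add: sum.cl_ivl_Suc)

lemma repunit_val_cong: "(\<And>i. i \<in> {1..K} \<Longrightarrow> t i = t' i) \<Longrightarrow> repunit_val b K t = repunit_val b K t'"
  unfolding repunit_val_def by (intro sum.cong) auto

lemma digit_sum_cong: "(\<And>i. i \<in> {1..K} \<Longrightarrow> t i = t' i) \<Longrightarrow> digit_sum K t = digit_sum K t'"
  unfolding digit_sum_def by (intro sum.cong) auto

lemma repunit_normal_cong: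
  "(\<And>i. i \<in> {1..K} \<Longrightarrow> t i = t' i) \<Longrightarrow> repunit_normal b K t \<Longrightarrow> repunit_normal b K t'"
  unfolding repunit_normal_def by (metis atLeastAtMost_iff less_imp_le_nat order_trans)

lemma repunit_normal_Suc: "repunit_normal b (Suc K) t \<Longrightarrow> repunit_normal b K t"
  unfolding repunit_normal_def by auto

lemma digit_term_le_repunit_val: "i \<in> {1..K} \<Longrightarrow> t i * repunit b i \<le> repunit_val b K t"
  unfolding repunit_val_def by (rule member_le_sum) auto

lemma digit_sum_le_repunit_val: "digit_sum K t \<le> repunit_val b K t"
  unfolding digit_sum_def repunit_val_def
  by (rule sum_mono) (use repunit_pos in force)

text \<open>Normal digit vectors behave like ordinary positional digits: the value stays below the
  next repunit, because \<open>b\<close> copies of \<open>repunit b K\<close> are one short of \<open>repunit b (Suc K)\<close>.\<close>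

lemma repunit_val_less:
  assumes "b \<ge> 1" and "repunit_normal b K t"
  shows "repunit_val b K t < repunit b (Suc K)"
  using assms(2)
proof (induction K)
  case 0
  then show ?case by (simp add: repunit_val_def)
next
  case (Suc K)
  have top: "t (Suc K) \<le> b" "t (Suc K) = b \<Longrightarrow> \<forall>j. 1 \<le> j \<and> j < Suc K \<longrightarrow> t j = 0"
    using Suc.prems unfolding repunit_normal_def by auto
  show ?case
  proof (cases "t (Suc K) = b")
    case True
    then have "repunit_val b K t = 0"
      using top(2) unfolding repunit_val_def by (intro sum.neutral) auto
    then show ?thesis using True by (simp add: repunit_val_Suc)
  next
    case False
    then have "t (Suc K) * repunit b (Suc K) + repunit b (Suc K) \<le> b * repunit b (Suc K)"
      using top(1) by (metis add.commute le_neq_implies_less less_eq_Suc_le mult_Suc mult_le_mono1)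
    then show ?thesis
      using Suc.IH[OF repunit_normal_Suc[OF Suc.prems]] by (simp add: repunit_val_Suc)
  qed
qed

lemma repunit_normal_unique:
  assumes "b \<ge> 1" and "repunit_normal b K t" and "repunit_normal b K t'"
    and "repunit_val b K t = repunit_val b K t'"
  shows "i \<in> {1..K} \<Longrightarrow> t i = t' i"
  using assms(2-)
proof (induction K)
  case 0
  then show ?case by simp
next
  case (Suc K)
  let ?R = "repunit b (Suc K)"
  have normal: "repunit_normal b K t" "repunit_normal b K t'"
    using Suc.prems repunit_normal_Suc by auto
  have "repunit_val b K t < ?R" "repunit_val b K t' < ?R"
    using repunit_val_less[OF assms(1)] normal by auto
  then have "t (Suc K) = t' (Suc K) \<and> repunit_val b K t = repunit_val b K t'"
    using Suc.prems(4) unfolding repunit_val_Suc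
    by (metis add.commute div_mult_self3 div_less mod_mult_self3 mod_less gr_implies_not0 add_0)
  then show ?case using Suc.IH[OF _ normal] Suc.prems(1) by (cases "i = Suc K") auto
qed

definition mset_val :: "nat \<Rightarrow> nat multiset \<Rightarrow> nat" where
  "mset_val b M = sum_mset (image_mset (repunit b) M)"

definition mset_normal :: "nat \<Rightarrow> nat multiset \<Rightarrow> bool" where
  "mset_normal b M \<longleftrightarrow> 0 \<notin># M \<and> (\<forall>i. count M i \<le> b) \<and>
     (\<forall>i j. count M i = b \<longrightarrow> 1 \<le> j \<longrightarrow> j < i \<longrightarrow> count M j = 0)"

lemma mset_val_empty [simp]: "mset_val b {#} = 0"
  and mset_val_add_mset [simp]: "mset_val b (add_mset x M) = repunit b x + mset_val b M"
  and mset_val_union [simp]: "mset_val b (M + N) = mset_val b M + mset_val b N"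
  and mset_val_replicate [simp]: "mset_val b (replicate_mset k x) = k * repunit b x"
  unfolding mset_val_def by simp_all

lemma repunit_le_mset_val: "x \<in># M \<Longrightarrow> repunit b x \<le> mset_val b M"
  by (metis insert_DiffM le_add1 mset_val_add_mset)

lemma mset_val_eq_repunit_val:
  assumes "set_mset N \<subseteq> {1..K}"
  shows "repunit_val b K (count N) = mset_val b N" and "digit_sum K (count N) = size N"
proof -
  have "mset_val b N = (\<Sum>i=1..K. count N i * repunit b i) \<and> size N = (\<Sum>i=1..K. count N i)"
    using assms
  proof (induction N)
    case empty
    then show ?case by simp
  next
    case (add x N)
    have "(\<Sum>i=1..K. count (add_mset x N) i * repunit b i)
        = (\<Sum>i=1..K. count N i * repunit b i + (if i = x then repunit b x else 0))"
      and "(\<Sum>i=1..K. count (add_mset x N) i) = (\<Sum>i=1..K. count N i + (if i = x then 1 else 0))"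
      by (auto intro: sum.cong)
    with add show ?case by (simp add: sum.distrib)
  qed
  then show "repunit_val b K (count N) = mset_val b N" and "digit_sum K (count N) = size N"
    unfolding repunit_val_def digit_sum_def by simp_all
qed

lemma not_mset_normal_carry:
  assumes "b \<ge> 2" and "\<not> mset_normal b M" and "0 \<notin># M"
  obtains i j where "1 \<le> j" "j \<le> i" "replicate_mset b i + {#j#} \<subseteq># M"
proof (cases "\<exists>i. count M i > b")
  case True
  then obtain i where i: "count M i > b" by blast
  then have "i \<noteq> 0" using assms(1,3) by (metis count_inI gr_implies_not0)
  moreover have "replicate_mset b i + {#i#} \<subseteq># M"
    using i by (auto simp: subseteq_mset_def)
  ultimately show ?thesis using that[of i i] by simp
next
  case False
  then obtain i j where ij: "count M i = b" "1 \<le> j" "j < i" "count M j \<noteq> 0"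
    using assms(2,3) unfolding mset_normal_def by (auto simp: not_less)
  then have "replicate_mset b i + {#j#} \<subseteq># M"
    by (auto simp: subseteq_mset_def)
  with ij show ?thesis using that[of j i] by simp
qed

text \<open>The carry \<open>b \<cdot> R\<^sub>i + R\<^sub>j = R\<^sub>i\<^sub>+\<^sub>1 + b \<cdot> R\<^sub>j\<^sub>-\<^sub>1\<close> (for \<open>1 \<le> j \<le> i\<close>) keeps value and size
  and lowers the sum of the indices, so repeated carrying terminates in a normal form.\<close>

lemma mset_normal_exists:
  assumes "b \<ge> 2"
  shows "\<exists>N. mset_normal b N \<and> mset_val b N = mset_val b M \<and> size N \<le> size M"
proof (induction "size M + sum_mset M" arbitrary: M rule: less_induct)
  case less
  consider "mset_normal b M" | "0 \<in># M" | "\<not> mset_normal b M" "0 \<notin># M"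
    by blast
  then show ?case
  proof cases
    case 1
    then show ?thesis by blast
  next
    case 2
    then obtain M0 where M: "M = add_mset 0 M0" by (metis insert_DiffM)
    then have "size M0 + sum_mset M0 < size M + sum_mset M" by simp
    then show ?thesis using less[of M0] M by fastforce
  next
    case 3
    then obtain i j where ij: "1 \<le> j" "j \<le> i" and sub: "replicate_mset b i + {#j#} \<subseteq># M"
      using not_mset_normal_carry[OF assms] by blast
    define C where "C = M - (replicate_mset b i + {#j#})"
    have M: "M = C + (replicate_mset b i + {#j#})"
      using sub unfolding C_def by (metis subset_mset.diff_add)
    define M' where "M' = C + ({#Suc i#} + replicate_mset b (j - 1))"
    have "repunit b j = b * repunit b (j - 1) + 1" using ij by (cases j) auto
    then have val: "mset_val b M' = mset_val b M" unfolding M M'_def by simp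
    have "Suc i + b * (j - 1) < b * i + j"
    proof -
      obtain d k where "i = j + d" "j = Suc k" using ij by (metis le_Suc_ex not0_implies_Suc not_one_le_zero)
      moreover have bd: "2 * d \<le> b * d" using assms by simp
      ultimately show ?thesis using assms by (simp add: algebra_simps) (use bd in linarith)
    qed
    then have "size M' + sum_mset M' < size M + sum_mset M" unfolding M M'_def by simp
    moreover have "size M' = size M" unfolding M M'_def by simp
    ultimately show ?thesis using less[of M'] val by auto
  qed
qed

lemma mset_normal_support:
  assumes "b \<ge> 2" and "n \<ge> 1" and "mset_normal b N" and "mset_val b N \<le> b ^ n"
  shows "set_mset N \<subseteq> {1..n}"
proof
  fix x assume x: "x \<in># N"
  have "x \<noteq> 0" using assms(3) x unfolding mset_normal_def by metis
  have "repunit b x < repunit b (Suc n)"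
    using repunit_le_mset_val[OF x, of b] assms(4) power_less_repunit_Suc[OF assms(1,2)] by linarith
  moreover have "b \<ge> 1" using assms(1) by simp
  ultimately have "x < Suc n" using repunit_less_iff by blast
  with \<open>x \<noteq> 0\<close> show "x \<in> {1..n}" by auto
qed

lemma mset_normal_imp_repunit_normal: "mset_normal b N \<Longrightarrow> repunit_normal b K (count N)"
  unfolding mset_normal_def repunit_normal_def by auto

text \<open>\<open>RC b n\<close> consists exactly of the normal digit vectors on \<open>{1..n}\<close> of value at most \<open>b ^ n\<close>;
  the next two lemmas give the two inclusions.\<close>

lemma RC_imp_repunit_normal: "t \<in> RC b n \<Longrightarrow> repunit_normal b n t"
  unfolding RC_def repunit_normal_def by blast

lemma RC_repunit_val_le:
  assumes "b \<ge> 2" and "n \<ge> 1" and t: "t \<in> RC b n"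
  shows "repunit_val b n t \<le> b ^ n"
proof -
  obtain n' where n: "n = Suc n'" using assms(2) by (cases n) auto
  have t_top: "t n \<le> b - 1" "t n = b - 1 \<Longrightarrow> t 1 \<le> 1"
    "\<And>i. t n = b - 1 \<Longrightarrow> i \<in> {1..n'} \<Longrightarrow> i \<noteq> 1 \<Longrightarrow> t i = 0"
    using t n unfolding RC_def by auto
  have low: "repunit_val b n' t < repunit b n"
    using repunit_val_less[of b n' t] repunit_normal_Suc RC_imp_repunit_normal[OF t] assms(1) n by simp
  have pow: "(b - 1) * repunit b n + 1 = b ^ n" using repunit_eq assms(1) by simp
  have val: "repunit_val b n t = repunit_val b n' t + t n * repunit b n" using repunit_val_Suc n by simp
  show ?thesis
  proof (cases "t n = b - 1")
    case True
    have "repunit_val b n' t = repunit_val b n' (\<lambda>i. if i = 1 then t 1 else 0)"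
      using t_top(3)[OF True] by (intro repunit_val_cong) auto
    also have "\<dots> = (\<Sum>i=1..n'. if i = 1 then t 1 else 0)"
      unfolding repunit_val_def by (intro sum.cong) auto
    also have "\<dots> \<le> t 1" by (simp add: sum.delta)
    finally show ?thesis using val True pow t_top(2) by simp
  next
    case False
    then have "(t n + 1) * repunit b n \<le> (b - 1) * repunit b n"
      using t_top(1) by (intro mult_right_mono) auto
    then show ?thesis using val low pow by (simp add: distrib_right)
  qed
qed

lemma RC_if_repunit_val_le:
  assumes b: "b \<ge> 2" and n: "n \<ge> 2" and supp: "\<And>i. i \<notin> {1..n} \<Longrightarrow> t i = 0"
    and normal: "repunit_normal b n t" and val_le: "repunit_val b n t \<le> b ^ n"
  shows "t \<in> RC b n"
proof -
  obtain n' where n': "n = Suc n'" using n by (cases n) auto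
  have pow: "(b - 1) * repunit b n + 1 = b ^ n" using repunit_eq b by simp
  have big: "repunit b n \<ge> b + 1" using repunit_ge_Suc_base b n by simp
  have "t n * repunit b n \<le> b ^ n" using digit_term_le_repunit_val[of n n t b] n val_le by simp
  then have top: "t n \<le> b - 1"
  proof (rule contrapos_pp)
    assume "\<not> t n \<le> b - 1"
    then have "b * repunit b n \<le> t n * repunit b n" by (intro mult_right_mono) auto
    moreover have "b * repunit b n = (b - 1) * repunit b n + repunit b n" using b by (cases b) auto
    ultimately show "\<not> t n * repunit b n \<le> b ^ n" using pow big b by linarith
  qed
  have low: "t 1 \<le> 1 \<and> (\<forall>i\<in>{1..n}. i \<noteq> 1 \<and> i \<noteq> n \<longrightarrow> t i = 0)" if "t n = b - 1"
  proof -
    have "repunit_val b n' t \<le> 1"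
      using repunit_val_Suc[of b n' t] n' that val_le pow by simp
    then have small: "t i * repunit b i \<le> 1" if "i \<in> {1..n'}" for i
      using digit_term_le_repunit_val[OF that, of t b] by simp
    have "t i = 0" if i: "i \<in> {1..n}" "i \<noteq> 1" "i \<noteq> n" for i
    proof (rule ccontr)
      assume "t i \<noteq> 0"
      then have "repunit b i \<le> t i * repunit b i" by simp
      moreover have "repunit b i \<ge> b + 1" using repunit_ge_Suc_base b i by simp
      moreover have "i \<in> {1..n'}" using i n' by auto
      then have "t i * repunit b i \<le> 1" by (rule small)
      ultimately show False using b by linarith
    qed
    moreover have "t 1 \<le> 1" using small[of 1] n' n by simp
    ultimately show ?thesis by blast
  qed
  show ?thesis
    unfolding RC_def mem_Collect_eq
  proof (intro conjI)
    show "\<forall>i\<in>{1..n}. t i \<le> b"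
      and "\<forall>i\<in>{1..n}. t i = b \<longrightarrow> (\<forall>j. 1 \<le> j \<and> j < i \<longrightarrow> t j = 0)"
      using normal unfolding repunit_normal_def by blast+
  qed (use supp top low in blast)+
qed

lemma ex_RC_repunit_val:
  assumes b: "b \<ge> 2" and n: "n \<ge> 2" and w: "w \<le> b ^ n"
  obtains t where "t \<in> RC b n" and "repunit_val b n t = w"
proof -
  obtain N where N: "mset_normal b N" "mset_val b N = w"
    using mset_normal_exists[OF b, of "replicate_mset w 1"] by auto
  have supp: "set_mset N \<subseteq> {1..n}" using mset_normal_support[OF b _ N(1)] N(2) w n by simp
  define t where "t i = (if i \<in> {1..n} then count N i else 0)" for i
  have agree: "\<And>i. i \<in> {1..n} \<Longrightarrow> count N i = t i" unfolding t_def by simp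
  have val: "repunit_val b n t = w"
    using repunit_val_cong[OF agree] mset_val_eq_repunit_val(1)[OF supp] N(2) by simp
  have "t \<in> RC b n"
  proof (rule RC_if_repunit_val_le[OF b n])
    show "\<And>i. i \<notin> {1..n} \<Longrightarrow> t i = 0" unfolding t_def by auto
    show "repunit_normal b n t"
      using repunit_normal_cong[OF agree mset_normal_imp_repunit_normal[OF N(1)]] .
    show "repunit_val b n t \<le> b ^ n" using val w by simp
  qed
  with val show thesis using that by blast
qed

text \<open>Normalizing a multiset never increases its size, and the normal form of a value is unique.\<close>

lemma RC_digit_sum_minimal:
  assumes b: "b \<ge> 2" and n: "n \<ge> 2" and t: "t \<in> RC b n" and J: "mset_val b J = repunit_val b n t"
  shows "digit_sum n t \<le> size J"
proof -
  obtain N where N: "mset_normal b N" "mset_val b N = mset_val b J" "size N \<le> size J"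
    using mset_normal_exists[OF b] by blast
  have supp: "set_mset N \<subseteq> {1..n}"
    using mset_normal_support[OF b _ N(1)] N(2) J RC_repunit_val_le[OF b _ t] n by simp
  have "count N i = t i" if "i \<in> {1..n}" for i
    using repunit_normal_unique[OF _ mset_normal_imp_repunit_normal[OF N(1)] RC_imp_repunit_normal[OF t] _ that]
      b mset_val_eq_repunit_val(1)[OF supp] N(2) J by simp
  then have "digit_sum n t = digit_sum n (count N)" by (intro digit_sum_cong) simp
  then have "digit_sum n t = size N" using mset_val_eq_repunit_val(2)[OF supp] by simp
  with N(3) show ?thesis by simp
qed

lemma monoid_gen_add: "x \<in> monoid_gen A \<Longrightarrow> y \<in> monoid_gen A \<Longrightarrow> x + y \<in> monoid_gen A"
  by (induction x rule: monoid_gen.induct) (auto simp: add.assoc intro: monoid_gen.add)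

lemma monoid_gen_mult: "a \<in> monoid_gen A \<Longrightarrow> k * a \<in> monoid_gen A"
  by (induction k) (auto intro: monoid_gen_add monoid_gen.zero)

lemma monoid_gen_sum: "(\<And>i. i \<in> F \<Longrightarrow> f i \<in> monoid_gen A) \<Longrightarrow> sum f F \<in> monoid_gen A"
  by (induction F rule: infinite_finite_induct) (auto intro: monoid_gen_add monoid_gen.zero)

lemma generator_in_monoid_gen: "a \<in> A \<Longrightarrow> a \<in> monoid_gen A"
  using monoid_gen.add[OF _ monoid_gen.zero] by simp

lemma monoid_gen_range_imp_sum_mset:
  "s \<in> monoid_gen (range f) \<Longrightarrow> \<exists>J. s = sum_mset (image_mset f J)"
proof (induction s rule: monoid_gen.induct)
  case zero
  show ?case by (intro exI[of _ "{#}"]) simp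
next
  case (add a s)
  then obtain i J where "a = f i" "s = sum_mset (image_mset f J)" by blast
  then show ?case by (intro exI[of _ "add_mset i J"]) simp
qed

lemma SCplus_eq: "SCplus b n = monoid_gen (range (\<lambda>i. b ^ (n + i) + 1))"
  unfolding SCplus_def by (simp add: full_SetCompr_eq)

definition SC_comb :: "nat \<Rightarrow> nat \<Rightarrow> (nat \<Rightarrow> nat) \<Rightarrow> nat" where
  "SC_comb b n t = (\<Sum>i=1..n. t i * (b ^ (n + i) + 1))"

lemma SC_comb_add_multiple_in_SCplus: "SC_comb b n t + (b ^ n + 1) * D \<in> SCplus b n"
proof -
  have gen: "b ^ (n + i) + 1 \<in> SCplus b n" for i
    unfolding SCplus_eq by (rule generator_in_monoid_gen) simp
  have "SC_comb b n t \<in> SCplus b n"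
    unfolding SC_comb_def using gen unfolding SCplus_eq by (intro monoid_gen_sum monoid_gen_mult)
  moreover have "(b ^ n + 1) * D \<in> SCplus b n"
    using gen[of 0] unfolding SCplus_eq by (metis monoid_gen_mult mult.commute add_0_right)
  ultimately show ?thesis unfolding SCplus_eq by (rule monoid_gen_add)
qed

lemma generator_eq:
  assumes "b \<ge> 1"
  shows "b ^ (n + j) + 1 = b ^ n * (b - 1) * repunit b j + (b ^ n + 1)"
proof -
  have "b ^ n * (b - 1) * repunit b j + (b ^ n + 1) = b ^ n * ((b - 1) * repunit b j + 1) + 1"
    by (simp add: algebra_simps)
  also have "\<dots> = b ^ (n + j) + 1" using repunit_eq[OF assms] by (simp add: power_add)
  finally show ?thesis by simp
qed

lemma sum_mset_image_affine:
  "(\<And>j. f j = K * g j + c) \<Longrightarrow> sum_mset (image_mset f J) = K * sum_mset (image_mset g J) + c * size J"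
  by (induction J) (simp_all add: algebra_simps)

lemma sum_mset_generators:
  assumes "b \<ge> 1"
  shows "sum_mset (image_mset (\<lambda>j. b ^ (n + j) + 1) J)
    = b ^ n * (b - 1) * mset_val b J + (b ^ n + 1) * size J"
  unfolding mset_val_def by (rule sum_mset_image_affine) (rule generator_eq[OF assms])

lemma SC_comb_eq:
  assumes "b \<ge> 1"
  shows "SC_comb b n t = b ^ n * (b - 1) * repunit_val b n t + (b ^ n + 1) * digit_sum n t"
proof -
  define K where "K = b ^ n * (b - 1)"
  have gen: "b ^ (n + i) + 1 = K * repunit b i + (b ^ n + 1)" for i
    unfolding K_def by (rule generator_eq[OF assms])
  have "SC_comb b n t = (\<Sum>i=1..n. K * (t i * repunit b i) + (b ^ n + 1) * t i)"
    unfolding SC_comb_def gen by (simp add: algebra_simps)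
  also have "\<dots> = K * repunit_val b n t + (b ^ n + 1) * digit_sum n t"
    unfolding repunit_val_def digit_sum_def by (simp add: sum.distrib sum_distrib_left)
  finally show ?thesis unfolding K_def .
qed

lemma SCplus_decompose:
  assumes b: "b \<ge> 2" and n: "n \<ge> 2" and s: "s \<in> SCplus b n"
  obtains t D where "t \<in> RC b n" and "s = SC_comb b n t + (b ^ n + 1) * D"
proof -
  define K where "K = b ^ n * (b - 1)"
  let ?m = "b ^ n + 1"
  obtain J where J: "s = sum_mset (image_mset (\<lambda>j. b ^ (n + j) + 1) J)"
    using monoid_gen_range_imp_sum_mset s unfolding SCplus_eq by blast
  define k where "k = mset_val b J div ?m"
  define w where "w = mset_val b J mod ?m"
  have val: "mset_val b J = w + ?m * k" unfolding w_def k_def by (rule mod_mult_div_eq[symmetric])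
  have "w < ?m" unfolding w_def by simp
  then have "w \<le> b ^ n" by simp
  then obtain t where t: "t \<in> RC b n" "repunit_val b n t = w" using ex_RC_repunit_val[OF b n] by blast
  have "digit_sum n t \<le> K * k + size J"
  proof (cases "k = 0")
    case True
    then show ?thesis using RC_digit_sum_minimal[OF b n t(1)] val t(2) by simp
  next
    case False
    have "digit_sum n t \<le> b ^ n" using digit_sum_le_repunit_val[of n t b] t(2) \<open>w \<le> b ^ n\<close> by simp
    also have "\<dots> \<le> K * k" using False b unfolding K_def by simp
    finally show ?thesis by simp
  qed
  then obtain D where D: "K * k + size J = digit_sum n t + D" using le_Suc_ex by blast
  have "s = K * mset_val b J + ?m * size J"
    using J sum_mset_generators[of b n J] b unfolding K_def by simp
  also have "\<dots> = K * w + ?m * (K * k + size J)"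
    unfolding val by (simp add: algebra_simps)
  also have "\<dots> = K * repunit_val b n t + ?m * digit_sum n t + ?m * D"
    unfolding D t(2) by (simp add: algebra_simps)
  also have "\<dots> = SC_comb b n t + ?m * D"
    using SC_comb_eq[of b n t] b unfolding K_def by simp
  finally show thesis using t(1) that by blast
qed

lemma coprime_pred_power_plus_one:
  fixes b n :: nat
  assumes "even b" and "b \<ge> 2"
  shows "coprime (b - 1) (b ^ n + 1)"
proof -
  have "b ^ n + 1 = repunit b n * (b - 1) + 2"
    using repunit_eq[of b n] assms(2) by (simp add: mult.commute)
  then have "gcd (b - 1) (b ^ n + 1) = gcd (b - 1) 2" by (simp only: gcd_add_mult)
  moreover have "coprime (b - 1) 2" using assms by simp
  ultimately show ?thesis by (simp add: coprime_iff_gcd_eq_1)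
qed

lemma SC_comb_eq_shift_imp_zero:
  fixes b n :: nat
  assumes "even b" and b: "b \<ge> 2" and n: "n \<ge> 2" and t: "t \<in> RC b n" and t': "t' \<in> RC b n"
    and eq: "SC_comb b n t = SC_comb b n t' + (b ^ n + 1) * D"
  shows "D = 0"
proof -
  let ?m = "b ^ n + 1" and ?K = "b ^ n * (b - 1)"
  let ?v = "repunit_val b n t" and ?v' = "repunit_val b n t'"
  have eq': "?K * ?v + ?m * digit_sum n t = ?K * ?v' + ?m * (digit_sum n t' + D)"
    using eq SC_comb_eq[of b n] b by (simp add: algebra_simps)
  have "[?K * ?v = ?K * ?v'] (mod ?m)"
    unfolding cong_def using arg_cong[OF eq', of "\<lambda>x. x mod ?m"] by (simp only: mod_mult_self2)
  moreover have "coprime ?K ?m"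
    using coprime_pred_power_plus_one[OF assms(1,2)] by simp
  ultimately have "[?v = ?v'] (mod ?m)" by (simp add: cong_mult_lcancel_nat)
  moreover have "?v < ?m" "?v' < ?m"
    using RC_repunit_val_le[OF b _ t] RC_repunit_val_le[OF b _ t'] n by simp_all
  ultimately have v: "?v = ?v'" by (rule cong_less_modulus_unique_nat)
  have ds: "digit_sum n t = digit_sum n t'"
    using repunit_normal_unique[OF _ RC_imp_repunit_normal[OF t] RC_imp_repunit_normal[OF t'] v] b
    by (intro digit_sum_cong) simp
  from eq' have "?m * digit_sum n t' = ?m * (digit_sum n t' + D)"
    unfolding v ds by (rule add_left_imp_eq)
  then show ?thesis by (simp only: mult_cancel_left) simp
qed

lemma Apery_eq_image:
  assumes closed: "\<And>x D. x \<in> T \<Longrightarrow> r x + m * D \<in> S"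
    and decompose: "\<And>s. s \<in> S \<Longrightarrow> \<exists>x\<in>T. \<exists>D. s = r x + m * D"
    and rigid: "\<And>x x' D. x \<in> T \<Longrightarrow> x' \<in> T \<Longrightarrow> r x = r x' + m * D \<Longrightarrow> D = 0"
  shows "Apery S m = r ` T"
proof (intro equalityI subsetI)
  fix s assume "s \<in> Apery S m"
  then have s: "s \<in> S" "\<not> (m \<le> s \<and> s - m \<in> S)" unfolding Apery_def by auto
  then obtain x D where x: "x \<in> T" and s_eq: "s = r x + m * D" using decompose by blast
  have "D = 0"
  proof (rule ccontr)
    assume "D \<noteq> 0"
    then have "m \<le> s" and "s - m = r x + m * (D - 1)"
      using s_eq by (auto simp: algebra_simps mult_eq_if)
    with s(2) closed[OF x] show False by metis
  qed
  with x s_eq show "s \<in> r ` T" by simp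
next
  fix s assume "s \<in> r ` T"
  then obtain x where x: "x \<in> T" and s_eq: "s = r x" by blast
  have "\<not> (m \<le> s \<and> s - m \<in> S)"
  proof
    assume "m \<le> s \<and> s - m \<in> S"
    then obtain x' D where "x' \<in> T" and "s - m = r x' + m * D" "m \<le> s"
      using decompose by blast
    then have "r x = r x' + m * Suc D" using s_eq by simp
    with rigid[OF x \<open>x' \<in> T\<close>] show False by blast
  qed
  with closed[OF x, of 0] s_eq show "s \<in> Apery S m" unfolding Apery_def by simp
qed

theorem mainTheorem16:
  fixes b n :: nat
  assumes "even b" and "b \<ge> 2" and "n \<ge> 2"
  shows "Apery (SCplus b n) (b ^ n + 1) =
         {(\<Sum>i=1..n. t i * (b ^ (n + i) + 1)) | t. t \<in> RC b n}"
proof -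
  have "Apery (SCplus b n) (b ^ n + 1) = SC_comb b n ` RC b n"
  proof (rule Apery_eq_image)
    show "SC_comb b n t + (b ^ n + 1) * D \<in> SCplus b n" for t D
      by (rule SC_comb_add_multiple_in_SCplus)
    show "\<exists>t\<in>RC b n. \<exists>D. s = SC_comb b n t + (b ^ n + 1) * D" if "s \<in> SCplus b n" for s
      using SCplus_decompose[OF assms(2,3) that] by blast
    show "D = 0" if "t \<in> RC b n" "t' \<in> RC b n"
      "SC_comb b n t = SC_comb b n t' + (b ^ n + 1) * D" for t t' D
      using SC_comb_eq_shift_imp_zero[OF assms that] .
  qed
  then show ?thesis unfolding SC_comb_def by blast
qed

end
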